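(* Let $\mathcal{H}$ be a $k$-uniform hypergraph with vertex degrees $d_i$, and for each vertex $i$ let \[ m_{i}=\frac{\sum_{\{i,i_{2},\cdots,i_{k}\}\in E(\mathcal{H})}d_{i_{2}}\cdots d_{i_{k}}}{d_{i}^{k-1}}. \] Then \[ \rho(\mathcal{Q}(\mathcal{H}))\leq\max_{e\in E(\mathcal{H})}\max_{\{i,j\}\subseteq e}\frac{d_{i}+d_{j}+\sqrt{(d_{i}-d_{j})^{2}+4m_{i}m_{j}}}{2}. \]
   Context: A $k$-uniform hypergraph $\mathcal{H}$ on vertex set $[n]$ has edges that are $k$-element subsets of $[n]$; $d_i$ is the number of edges containing vertex $i$. The sum over $\{i,i_2,\dots,i_k\}\in E(\mathcal{H})$ runs over the edges containing $i$, with $i_2,\dots,i_k$ the other vertices of that edge. The adjacency tensor $\mathcal{A}(\mathcal{H})$ has entries $\mathcal{A}_{i_1\cdots i_k}=\frac{1}{(k-1)!}$ if $\{i_1,\dots,i_k\}\in E(\mathcal{H})$ and $0$ otherwise; $\mathcal{D}(\mathcal{H})$ is the diagonal tensor with $\mathcal{D}_{i\cdots i}=d_i$; $\mathcal{Q}(\mathcal{H})=\mathcal{D}(\mathcal{H})+\mathcal{A}(\mathcal{H})$ is the signless Laplacian tensor. For a tensor $\mathcal{T}$ and $x\in\mathbb{C}^n$, $(\mathcal{T}x)_i=\sum_{i_2,\dots,i_k}\mathcal{T}_{ii_2\cdots i_k}x_{i_2}\cdots x_{i_k}$; $\lambda$ is an eigenvalue if $\mathcal{T}x=\lambda x^{[k-1]}$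 for some nonzero $x$, where $x^{[k-1]}=(x_1^{k-1},\dots,x_n^{k-1})^T$; $\rho(\mathcal{T})$ is the maximum modulus of eigenvalues. *)

theory Defs
  imports "HOL-Analysis.Analysis"
begin

text \<open>A k-uniform hypergraph on vertex set {0..<n} (standing for [n]) with edge set E.\<close>
definition uniform_hypergraph :: "nat \<Rightarrow> nat \<Rightarrow> nat set set \<Rightarrow> bool" where
  "uniform_hypergraph n k E \<longleftrightarrow> (\<forall>e\<in>E. e \<subseteq> {..<n} \<and> card e = k)"

definition hdeg :: "nat set set \<Rightarrow> nat \<Rightarrow> nat" where
  "hdeg E i = card {e \<in> E. i \<in> e}"

text \<open>Tensors of order k and dimension n: functions on index lists (of length k, entries < n).\<close>
type_synonym tensor = "nat list \<Rightarrow> real"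

definition adj_tensor :: "nat \<Rightarrow> nat set set \<Rightarrow> tensor" where
  "adj_tensor k E is = (if length is = k \<and> set is \<in> E then 1 / fact (k - 1) else 0)"

definition deg_tensor :: "nat \<Rightarrow> nat set set \<Rightarrow> tensor" where
  "deg_tensor k E is = (if length is = k \<and> is \<noteq> [] \<and> (\<forall>j\<in>set is. j = hd is)
                         then real (hdeg E (hd is)) else 0)"

definition signless_laplacian_tensor :: "nat \<Rightarrow> nat set set \<Rightarrow> tensor" where
  "signless_laplacian_tensor k E is = deg_tensor k E is + adj_tensor k E is"

definition tensor_apply :: "nat \<Rightarrow> nat \<Rightarrow> tensor \<Rightarrow> (nat \<Rightarrow> complex) \<Rightarrow> nat \<Rightarrow> complex" where
  "tensor_apply n k T x i =
     (\<Sum>is \<in> {is. length is = k - 1 \<and> set is \<subseteq> {..<n}}.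
        complex_of_real (T (i # is)) * (\<Prod>j\<leftarrow>is. x j))"

definition tensor_eigenvalue :: "nat \<Rightarrow> nat \<Rightarrow> tensor \<Rightarrow> complex \<Rightarrow> bool" where
  "tensor_eigenvalue n k T mu \<longleftrightarrow>
     (\<exists>x. (\<exists>i<n. x i \<noteq> 0) \<and> (\<forall>i<n. tensor_apply n k T x i = mu * x i ^ (k - 1)))"

definition tensor_spectral_radius :: "nat \<Rightarrow> nat \<Rightarrow> tensor \<Rightarrow> real" where
  "tensor_spectral_radius n k T = Sup {cmod mu | mu. tensor_eigenvalue n k T mu}"

definition mval :: "nat \<Rightarrow> nat set set \<Rightarrow> nat \<Rightarrow> real" where
  "mval k E i = (\<Sum>e \<in> {e \<in> E. i \<in> e}. \<Prod>j \<in> e - {i}. real (hdeg E j))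
                 / real (hdeg E i) ^ (k - 1)"

definition pair_bound :: "nat \<Rightarrow> nat set set \<Rightarrow> nat \<Rightarrow> nat \<Rightarrow> real" where
  "pair_bound k E i j = (real (hdeg E i) + real (hdeg E j)
      + sqrt ((real (hdeg E i) - real (hdeg E j))^2 + 4 * mval k E i * mval k E j)) / 2"

end

theory Submission
  imports Defs "HOL-Combinatorics.Multiset_Permutations" "Jordan_Normal_Form.Spectral_Radius"
begin

text \<open>
  Let x be an eigenvector for \<mu> and scale it by the degrees, r j = |x j| / d j. The eigen-equation
  at a vertex i says that (\<mu> - d i) x i ^ (k - 1) is the sum, over the edges e through i, of the
  products of the x j with j \<in> e - {i}; hence
  |\<mu> - d i| r i ^ (k - 1) \<le> m i c ^ (k - 1) whenever c bounds r on the neighbours of i.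
  Choose p maximising r over all vertices and q maximising r over the neighbours of p: the two
  resulting inequalities multiply to (|\<mu>| - d p)(|\<mu>| - d q) \<le> m p m q, which puts |\<mu>| below the
  larger root of this quadratic, i.e. the bound attached to the edge through p and q.
  As the spectral radius is a supremum, one also needs some eigenvalue to exist.
\<close>

lemma finite_arg_max:
  fixes f :: "'a \<Rightarrow> 'b::linorder"
  assumes "finite A" "A \<noteq> {}"
  obtains a where "a \<in> A" "\<And>b. b \<in> A \<Longrightarrow> f b \<le> f a"
proof -
  have "Max (f ` A) \<in> f ` A" using assms by simp
  then obtain a where "a \<in> A" "f a = Max (f ` A)" by auto
  thus ?thesis using that assms by simp
qed

lemma le_larger_quadratic_root:
  fixes a dp dq al be M :: real
  assumes "a - dp \<le> al" "a - dq \<le> be" "0 \<le> al" "0 \<le> be" "al * be \<le> M"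
  shows "a \<le> (dp + dq + sqrt ((dp - dq)^2 + 4 * M)) / 2"
proof -
  have M: "0 \<le> M" using assms(3-5) by (meson mult_nonneg_nonneg order_trans)
  have sq: "\<bar>dp - dq\<bar> \<le> sqrt ((dp - dq)^2 + 4 * M)" using M by (intro real_le_rsqrt) simp
  show ?thesis
  proof (cases "a \<le> dp \<or> a \<le> dq")
    case True thus ?thesis using sq by (auto simp: abs_if split: if_splits)
  next
    case False
    hence "(a - dp) * (a - dq) \<le> al * be" using assms by (intro mult_mono) auto
    hence "(2*a - dp - dq)^2 \<le> (dp - dq)^2 + 4 * M" using assms(5)
      by (simp add: power2_eq_square algebra_simps)
    hence "2*a - dp - dq \<le> sqrt ((dp - dq)^2 + 4 * M)" using real_le_rsqrt by blast
    thus ?thesis by simp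
  qed
qed

lemma product_le_of_cross_bounds:
  fixes al be mp mq a b :: real
  assumes "al * a ^ N \<le> mp * b ^ N" "be * b ^ N \<le> mq * a ^ N"
    and "0 < a" "0 \<le> b" "0 \<le> al" "0 \<le> be" "0 \<le> mp" "0 \<le> mq"
  shows "al * be \<le> mp * mq"
proof (cases "b ^ N = 0")
  case True
  hence "al * a ^ N \<le> 0" using assms(1) by (simp only: mult_zero_right)
  hence "al = 0" using assms(3,5) by (smt (verit) mult_pos_pos zero_less_power)
  thus ?thesis using assms(7,8) by simp
next
  case False
  hence "0 < b ^ N" using zero_le_power[OF assms(4), of N] by linarith
  hence ab: "0 < a ^ N * b ^ N" using assms(3) by simp
  have "(al * a ^ N) * (be * b ^ N) \<le> (mp * b ^ N) * (mq * a ^ N)"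
    by (rule mult_mono) (use assms in auto)
  hence "(al * be) * (a ^ N * b ^ N) \<le> (mp * mq) * (a ^ N * b ^ N)"
    by (simp add: mult_ac)
  thus ?thesis by (simp only: mult_le_cancel_right_pos[OF ab])
qed

lemma uniform_hypergraph_finite: "uniform_hypergraph n k E \<Longrightarrow> finite E"
  by (rule finite_subset[of E "Pow {..<n}"]) (auto simp: uniform_hypergraph_def)

lemma uniform_hypergraph_edgeD:
  assumes "uniform_hypergraph n k E" "e \<in> E"
  shows "card e = k" "e \<subseteq> {..<n}" "finite e"
  using assms finite_subset[of e "{..<n}"] unfolding uniform_hypergraph_def by auto

lemma card_edge_Diff_vertex:
  assumes "uniform_hypergraph n k E" "e \<in> E" "i \<in> e"
  shows "card (e - {i}) = k - 1"
  using uniform_hypergraph_edgeD[OF assms(1,2)] assms(3) by simp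

lemma edge_other_vertex:
  assumes "uniform_hypergraph n k E" "k \<ge> 2" "e \<in> E" "p \<in> e"
  obtains q where "q \<in> e" "q \<noteq> p"
proof -
  have "card (e - {p}) \<noteq> 0" using card_edge_Diff_vertex[OF assms(1,3,4)] assms(2) by simp
  then obtain q where "q \<in> e - {p}" by (metis card.empty ex_in_conv)
  thus ?thesis using that by blast
qed

lemma uniform_hypergraph_edge_pair:
  assumes "uniform_hypergraph n k E" "k \<ge> 2" "E \<noteq> {}"
  obtains e p q where "e \<in> E" "p \<in> e" "q \<in> e" "p \<noteq> q"
proof -
  obtain e where e: "e \<in> E" using assms(3) by blast
  obtain p where p: "p \<in> e"
    using uniform_hypergraph_edgeD(1)[OF assms(1) e] assms(2)
    by (metis card.empty ex_in_conv not_numeral_le_zero)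
  obtain q where "q \<in> e" "q \<noteq> p" using edge_other_vertex[OF assms(1,2) e p] .
  thus ?thesis using that e p by blast
qed

lemma hdeg_pos_if_in_edge:
  assumes "uniform_hypergraph n k E" "e \<in> E" "j \<in> e"
  shows "hdeg E j > 0"
  using assms uniform_hypergraph_finite[OF assms(1)] unfolding hdeg_def by (subst card_gt_0_iff) auto

lemma obtain_maximiser_and_neighbour_maximiser:
  fixes r :: "nat \<Rightarrow> real"
  assumes U: "uniform_hypergraph n k E" and k: "k \<ge> 2" and "j1 < n" "hdeg E j1 > 0"
  obtains e p q where "e \<in> E" "p \<in> e" "q \<in> e" "q \<noteq> p"
    and "\<And>j. j < n \<Longrightarrow> hdeg E j > 0 \<Longrightarrow> r j \<le> r p"
    and "\<And>e' j. e' \<in> E \<Longrightarrow> p \<in> e' \<Longrightarrow> j \<in> e' - {p} \<Longrightarrow> r j \<le> r q"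
proof -
  define V where "V = {j. j < n \<and> hdeg E j > 0}"
  have "finite V" "V \<noteq> {}" using assms(3,4) unfolding V_def by auto
  then obtain p where p: "p \<in> V" and p_max: "\<And>j. j \<in> V \<Longrightarrow> r j \<le> r p"
    using finite_arg_max[of V r] by blast
  obtain e0 where e0: "e0 \<in> E" "p \<in> e0"
    using p uniform_hypergraph_finite[OF U] unfolding V_def hdeg_def by (auto simp: card_gt_0_iff)
  obtain j0 where j0: "j0 \<in> e0" "j0 \<noteq> p" using edge_other_vertex[OF U k e0] .
  define N where "N = {j. \<exists>e\<in>E. p \<in> e \<and> j \<in> e \<and> j \<noteq> p}"
  have "N \<subseteq> V"
    using uniform_hypergraph_edgeD(2)[OF U] hdeg_pos_if_in_edge[OF U] unfolding N_def V_def by blast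
  moreover have "j0 \<in> N" using e0 j0 unfolding N_def by blast
  ultimately have "finite N" "N \<noteq> {}" using \<open>finite V\<close> finite_subset by auto
  then obtain q where q: "q \<in> N" and q_max: "\<And>j. j \<in> N \<Longrightarrow> r j \<le> r q"
    using finite_arg_max[of N r] by blast
  from q obtain e where "e \<in> E" "p \<in> e" "q \<in> e" "q \<noteq> p" unfolding N_def by blast
  moreover have "r j \<le> r q" if "e' \<in> E" "p \<in> e'" "j \<in> e' - {p}" for e' j
    using that q_max unfolding N_def by blast
  ultimately show ?thesis using that p_max unfolding V_def by blast
qed

lemma mval_nonneg: "0 \<le> mval k E i"
  unfolding mval_def by (intro divide_nonneg_nonneg sum_nonneg prod_nonneg) auto

lemma pair_bound_nonneg: "0 \<le> pair_bound k E i j"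
  unfolding pair_bound_def using mval_nonneg[of k E i] mval_nonneg[of k E j]
  by (intro divide_nonneg_nonneg add_nonneg_nonneg) auto

section \<open>The action of the signless Laplacian tensor\<close>

definition index_lists :: "nat \<Rightarrow> nat \<Rightarrow> nat list set" where
  "index_lists n m = {is. length is = m \<and> set is \<subseteq> {..<n}}"

lemma finite_index_lists: "finite (index_lists n m)"
  using finite_lists_length_eq[OF finite_lessThan[of n], of m]
  unfolding index_lists_def by (simp add: conj_commute)

lemma tensor_apply_index_lists:
  "tensor_apply n k T x i = (\<Sum>is\<in>index_lists n (k - 1). of_real (T (i # is)) * (\<Prod>j\<leftarrow>is. x j))"
  unfolding tensor_apply_def index_lists_def ..

lemma tensor_apply_add:
  "tensor_apply n k (\<lambda>is. S is + T is) x i = tensor_apply n k S x i + tensor_apply n k T x i"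
  unfolding tensor_apply_def by (simp add: sum.distrib distrib_right)

lemma tensor_apply_deg_tensor:
  assumes "k > 0" "i < n"
  shows "tensor_apply n k (deg_tensor k E) x i = of_real (real (hdeg E i)) * x i ^ (k - 1)"
proof -
  have "tensor_apply n k (deg_tensor k E) x i
      = (\<Sum>is\<in>index_lists n (k - 1).
           if is = replicate (k - 1) i then of_real (real (hdeg E i)) * x i ^ (k - 1) else 0)"
    unfolding tensor_apply_index_lists
  proof (rule sum.cong[OF refl])
    fix "is" assume "is \<in> index_lists n (k - 1)"
    hence len: "length is = k - 1" by (simp add: index_lists_def)
    hence "(\<forall>j\<in>set is. j = i) = (is = replicate (k - 1) i)"
      by (metis replicate_length_same in_set_replicate)
    thus "complex_of_real (deg_tensor k E (i # is)) * (\<Prod>j\<leftarrow>is. x j)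
        = (if is = replicate (k - 1) i then of_real (real (hdeg E i)) * x i ^ (k - 1) else 0)"
      using len assms(1) unfolding deg_tensor_def by (auto simp: prod_list_replicate)
  qed
  also have "\<dots> = of_real (real (hdeg E i)) * x i ^ (k - 1)"
  proof -
    have "replicate (k - 1) i \<in> index_lists n (k - 1)" using assms(2) by (auto simp: index_lists_def)
    thus ?thesis by (simp add: sum.delta[OF finite_index_lists])
  qed
  finally show ?thesis .
qed

text \<open>A hyperedge through \<open>i\<close> is hit by the \<open>(k - 1)!\<close> orderings of its other vertices.\<close>

lemma adj_tensor_support:
  assumes U: "uniform_hypergraph n k E" and k: "k > 0"
  shows "{is \<in> index_lists n (k - 1). set (i # is) \<in> E}
           = (\<Union>e\<in>{e\<in>E. i \<in> e}. permutations_of_set (e - {i}))"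
proof safe
  fix "is" assume "is \<in> index_lists n (k - 1)" "set (i # is) \<in> E"
  hence a: "length is = k - 1" "set (i # is) \<in> E" by (auto simp: index_lists_def)
  have "card (set (i # is)) = length (i # is)"
    using uniform_hypergraph_edgeD(1)[OF U a(2)] a(1) k by simp
  hence "distinct (i # is)" by (rule card_distinct)
  thus "is \<in> (\<Union>e\<in>{e\<in>E. i \<in> e}. permutations_of_set (e - {i}))"
    using a(2) by (intro UN_I[of "set (i # is)"]) (auto simp: permutations_of_set_def)
next
  fix "is" e assume a: "e \<in> E" "i \<in> e" "is \<in> permutations_of_set (e - {i})"
  hence "length is = card (e - {i})"
    using distinct_card unfolding permutations_of_set_def by fastforce
  moreover have "set (i # is) = e" using a unfolding permutations_of_set_def by auto
  ultimately show "is \<in> index_lists n (k - 1)" "set (i # is) \<in> E"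
    using a(1) card_edge_Diff_vertex[OF U a(1,2)] uniform_hypergraph_edgeD(2)[OF U a(1)]
    by (auto simp: index_lists_def)
qed

lemma sum_permutations_of_set_prod_list:
  fixes x :: "'a \<Rightarrow> 'b::comm_semiring_1"
  assumes "finite A"
  shows "(\<Sum>is\<in>permutations_of_set A. \<Prod>j\<leftarrow>is. x j) = of_nat (fact (card A)) * (\<Prod>j\<in>A. x j)"
proof -
  have "(\<Sum>is\<in>permutations_of_set A. \<Prod>j\<leftarrow>is. x j) = (\<Sum>is\<in>permutations_of_set A. \<Prod>j\<in>A. x j)"
    by (intro sum.cong refl) (auto simp: permutations_of_set_def prod.distinct_set_conv_list)
  thus ?thesis using assms by simp
qed

lemma tensor_apply_adj_tensor:
  assumes U: "uniform_hypergraph n k E" and k: "k > 0"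
  shows "tensor_apply n k (adj_tensor k E) x i = (\<Sum>e\<in>{e\<in>E. i \<in> e}. \<Prod>j\<in>e - {i}. x j)"
proof -
  let ?c = "complex_of_real (1 / fact (k - 1))"
  have "tensor_apply n k (adj_tensor k E) x i
      = (\<Sum>is\<in>index_lists n (k - 1). if set (i # is) \<in> E then ?c * (\<Prod>j\<leftarrow>is. x j) else 0)"
    unfolding tensor_apply_index_lists
  proof (rule sum.cong[OF refl])
    fix "is" assume "is \<in> index_lists n (k - 1)"
    hence "length (i # is) = k" using k by (simp add: index_lists_def)
    thus "of_real (adj_tensor k E (i # is)) * (\<Prod>j\<leftarrow>is. x j)
        = (if set (i # is) \<in> E then ?c * (\<Prod>j\<leftarrow>is. x j) else 0)"
      unfolding adj_tensor_def by simp
  qed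
  also have "\<dots> = (\<Sum>is\<in>{is \<in> index_lists n (k - 1). set (i # is) \<in> E}. ?c * (\<Prod>j\<leftarrow>is. x j))"
    by (rule sum.inter_filter[OF finite_index_lists, symmetric])
  also have "\<dots> = (\<Sum>e\<in>{e\<in>E. i \<in> e}. \<Sum>is\<in>permutations_of_set (e - {i}). ?c * (\<Prod>j\<leftarrow>is. x j))"
    unfolding adj_tensor_support[OF U k]
  proof (rule sum.UNION_disjoint)
    show "finite {e\<in>E. i \<in> e}" using uniform_hypergraph_finite[OF U] by simp
    show "\<forall>e\<in>{e\<in>E. i \<in> e}. \<forall>e'\<in>{e\<in>E. i \<in> e}. e \<noteq> e' \<longrightarrow>
        permutations_of_set (e - {i}) \<inter> permutations_of_set (e' - {i}) = {}"
      unfolding permutations_of_set_def by (auto simp: insert_Diff[symmetric])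
  qed simp
  also have "\<dots> = (\<Sum>e\<in>{e\<in>E. i \<in> e}. \<Prod>j\<in>e - {i}. x j)"
  proof (rule sum.cong[OF refl])
    fix e assume e: "e \<in> {e\<in>E. i \<in> e}"
    have "finite (e - {i})" "card (e - {i}) = k - 1"
      using e uniform_hypergraph_edgeD(3)[OF U] card_edge_Diff_vertex[OF U] by auto
    hence "(\<Sum>is\<in>permutations_of_set (e - {i}). ?c * (\<Prod>j\<leftarrow>is. x j))
        = ?c * (of_nat (fact (k - 1)) * (\<Prod>j\<in>e - {i}. x j))"
      by (simp only: sum_distrib_left[symmetric] sum_permutations_of_set_prod_list)
    also have "\<dots> = (\<Prod>j\<in>e - {i}. x j)"
      by (simp add: of_real_divide mult.assoc[symmetric])
    finally show "(\<Sum>is\<in>permutations_of_set (e - {i}). ?c * (\<Prod>j\<leftarrow>is. x j)) = (\<Prod>j\<in>e - {i}. x j)" .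
  qed
  finally show ?thesis .
qed

lemma tensor_apply_signless_laplacian:
  assumes "uniform_hypergraph n k E" "k > 0" "i < n"
  shows "tensor_apply n k (signless_laplacian_tensor k E) x i
           = of_real (real (hdeg E i)) * x i ^ (k - 1) + (\<Sum>e\<in>{e\<in>E. i \<in> e}. \<Prod>j\<in>e - {i}. x j)"
proof -
  have "signless_laplacian_tensor k E = (\<lambda>is. deg_tensor k E is + adj_tensor k E is)"
    by (simp add: signless_laplacian_tensor_def fun_eq_iff)
  thus ?thesis
    using tensor_apply_add tensor_apply_deg_tensor[OF assms(2,3)] tensor_apply_adj_tensor[OF assms(1,2)]
    by simp
qed

section \<open>Eigenvalues of the signless Laplacian tensor\<close>

lemma tensor_eigenvalue_exists_order2:
  assumes "n > 0"
  shows "\<exists>\<mu>. tensor_eigenvalue n 2 T \<mu>"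
proof -
  define A :: "complex Matrix.mat" where "A = Matrix.mat n n (\<lambda>(i,j). complex_of_real (T [i,j]))"
  have A: "A \<in> carrier_mat n n" unfolding A_def by simp
  obtain z where "eigenvalue A z"
    using spectrum_non_empty[OF A assms] unfolding spectrum_def by blast
  then obtain v where v: "v \<in> carrier_vec n" "v \<noteq> 0\<^sub>v n" "A *\<^sub>v v = z \<cdot>\<^sub>v v"
    unfolding eigenvalue_def eigenvector_def using A by auto
  define y where "y = vec_index v"
  have nz: "\<exists>i<n. y i \<noteq> 0"
    using v(1,2) unfolding y_def by (metis eq_vecI index_zero_vec(1,2) carrier_vecD)
  have singletons: "index_lists n (2 - 1) = (\<lambda>j. [j]) ` {..<n}"
    by (auto simp: index_lists_def length_Suc_conv)
  have "tensor_apply n 2 T y i = z * y i ^ (2 - 1)" if i: "i < n" for i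
  proof -
    have "tensor_apply n 2 T y i = (\<Sum>j<n. complex_of_real (T [i,j]) * y j)"
      unfolding tensor_apply_index_lists singletons by (subst sum.reindex) (auto simp: inj_on_def)
    also have "\<dots> = vec_index (A *\<^sub>v v) i"
      using i v(1) unfolding A_def y_def by (auto simp: scalar_prod_def lessThan_atLeast0 intro!: sum.cong)
    also have "\<dots> = z * y i" using v(1,3) i unfolding y_def by simp
    finally show ?thesis by simp
  qed
  thus ?thesis unfolding tensor_eigenvalue_def using nz by blast
qed

text \<open>For \<open>k \<ge> 3\<close> every product over \<open>e - {i}\<close> involves a vertex other than \<open>0\<close>,
  so the indicator vector of vertex \<open>0\<close> is an eigenvector for \<open>d\<^sub>0\<close>.\<close>

lemma signless_laplacian_eigenvalue_exists:
  assumes U: "uniform_hypergraph n k E" and k: "k \<ge> 2" and "n > 0"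
  shows "\<exists>\<mu>. tensor_eigenvalue n k (signless_laplacian_tensor k E) \<mu>"
proof (cases "k = 2")
  case True thus ?thesis using tensor_eigenvalue_exists_order2[OF \<open>n > 0\<close>] by simp
next
  case False
  hence k3: "k \<ge> 3" using k by simp
  define x :: "nat \<Rightarrow> complex" where "x j = (if j = 0 then 1 else 0)" for j
  have "tensor_apply n k (signless_laplacian_tensor k E) x i
          = of_real (real (hdeg E 0)) * x i ^ (k - 1)" if i: "i < n" for i
  proof -
    have "(\<Prod>j\<in>e - {i}. x j) = 0" if e: "e \<in> E" "i \<in> e" for e
    proof -
      have "card (e - {i}) \<ge> 2" using card_edge_Diff_vertex[OF U e] k3 by simp
      hence "\<not> e - {i} \<subseteq> {0}" using card_mono[of "{0}" "e - {i}"] by auto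
      then obtain j where "j \<in> e - {i}" "j \<noteq> 0" by blast
      thus ?thesis using uniform_hypergraph_edgeD(3)[OF U e(1)] unfolding x_def
        by (intro prod_zero) auto
    qed
    moreover have "x i ^ (k - 1) = 0" if "i \<noteq> 0" using that k unfolding x_def by simp
    ultimately show ?thesis
      using tensor_apply_signless_laplacian[OF U _ i, of x] k by (cases "i = 0") auto
  qed
  moreover have "\<exists>i<n. x i \<noteq> 0" using \<open>n > 0\<close> unfolding x_def by auto
  ultimately show ?thesis unfolding tensor_eigenvalue_def by blast
qed

lemma eigenvalue_zero_at_isolated_vertex:
  assumes "uniform_hypergraph n k E" "k > 0" "i < n" "hdeg E i = 0" "x i \<noteq> 0"
    and "tensor_apply n k (signless_laplacian_tensor k E) x i = \<mu> * x i ^ (k - 1)"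
  shows "\<mu> = 0"
proof -
  have no_edges: "{e\<in>E. i \<in> e} = {}"
    using assms(4) uniform_hypergraph_finite[OF assms(1)] unfolding hdeg_def by simp
  hence "tensor_apply n k (signless_laplacian_tensor k E) x i = 0"
    using assms(4) tensor_apply_signless_laplacian[OF assms(1-3), of x] unfolding no_edges by simp
  thus ?thesis using assms(5,6) by simp
qed

lemma eigenvector_ratio_bound:
  assumes U: "uniform_hypergraph n k E" and k: "k > 0" and i: "i < n" "hdeg E i > 0"
    and eq: "tensor_apply n k (signless_laplacian_tensor k E) x i = \<mu> * x i ^ (k - 1)"
    and bnd: "\<And>e j. e \<in> E \<Longrightarrow> i \<in> e \<Longrightarrow> j \<in> e - {i} \<Longrightarrow> cmod (x j) / real (hdeg E j) \<le> c"
  shows "cmod (\<mu> - of_real (real (hdeg E i))) * (cmod (x i) / real (hdeg E i)) ^ (k - 1)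
           \<le> mval k E i * c ^ (k - 1)"
proof -
  let ?Ei = "{e\<in>E. i \<in> e}" and ?d = "\<lambda>j. real (hdeg E j)"
  have "(\<mu> - of_real (?d i)) * x i ^ (k - 1) = (\<Sum>e\<in>?Ei. \<Prod>j\<in>e - {i}. x j)"
    using eq tensor_apply_signless_laplacian[OF U k i(1), of x] by (simp add: algebra_simps)
  hence "cmod (\<mu> - of_real (?d i)) * cmod (x i) ^ (k - 1) = cmod (\<Sum>e\<in>?Ei. \<Prod>j\<in>e - {i}. x j)"
    by (metis norm_mult norm_power)
  also have "\<dots> \<le> (\<Sum>e\<in>?Ei. \<Prod>j\<in>e - {i}. cmod (x j))"
    using norm_sum by (simp add: prod_norm)
  also have "\<dots> \<le> (\<Sum>e\<in>?Ei. \<Prod>j\<in>e - {i}. ?d j * c)"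
  proof (intro sum_mono prod_mono conjI)
    fix e j assume "e \<in> ?Ei" "j \<in> e - {i}"
    hence "cmod (x j) / ?d j \<le> c" "hdeg E j > 0" using bnd hdeg_pos_if_in_edge[OF U] by auto
    thus "cmod (x j) \<le> ?d j * c" by (simp add: pos_divide_le_eq mult.commute)
  qed simp
  also have "\<dots> = (\<Sum>e\<in>?Ei. (\<Prod>j\<in>e - {i}. ?d j) * c ^ (k - 1))"
    by (intro sum.cong refl) (auto simp: prod.distrib uniform_hypergraph_edgeD(1)[OF U])
  also have "\<dots> = (\<Sum>e\<in>?Ei. \<Prod>j\<in>e - {i}. ?d j) * c ^ (k - 1)"
    by (simp add: sum_distrib_right)
  also have "\<dots> = mval k E i * ?d i ^ (k - 1) * c ^ (k - 1)"
    unfolding mval_def using i(2) by simp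
  finally show ?thesis using i(2) by (simp add: power_divide field_simps)
qed

lemma cmod_le_pair_bound:
  assumes "cmod (\<mu> - of_real (real (hdeg E p))) * cmod (\<mu> - of_real (real (hdeg E q)))
             \<le> mval k E p * mval k E q"
  shows "cmod \<mu> \<le> pair_bound k E p q"
proof -
  have shift: "cmod \<mu> - t \<le> cmod (\<mu> - of_real t)" if "t \<ge> 0" for t
    using norm_triangle_ineq[of "\<mu> - of_real t" "of_real t"] that by simp
  have "cmod \<mu> \<le> (real (hdeg E p) + real (hdeg E q)
      + sqrt ((real (hdeg E p) - real (hdeg E q))^2 + 4 * (mval k E p * mval k E q))) / 2"
    using shift[of "real (hdeg E p)"] shift[of "real (hdeg E q)"]
    by (intro le_larger_quadratic_root[OF _ _ _ _ assms]) auto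
  thus ?thesis unfolding pair_bound_def by (simp add: mult.assoc)
qed

lemma eigenvalue_le_pair_bound_if_nonisolated_support:
  assumes U: "uniform_hypergraph n k E" and k: "k \<ge> 2"
    and eq: "\<And>i. i < n \<Longrightarrow> tensor_apply n k (signless_laplacian_tensor k E) x i = \<mu> * x i ^ (k - 1)"
    and j1: "j1 < n" "hdeg E j1 > 0" "x j1 \<noteq> 0"
  shows "\<exists>e p q. e \<in> E \<and> p \<in> e \<and> q \<in> e \<and> p \<noteq> q \<and> cmod \<mu> \<le> pair_bound k E p q"
proof -
  define d where "d j = real (hdeg E j)" for j
  define r where "r j = cmod (x j) / d j" for j
  obtain e p q where e: "e \<in> E" "p \<in> e" "q \<in> e" "q \<noteq> p"
    and p_max: "\<And>j. j < n \<Longrightarrow> hdeg E j > 0 \<Longrightarrow> r j \<le> r p"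
    and q_max: "\<And>e' j. e' \<in> E \<Longrightarrow> p \<in> e' \<Longrightarrow> j \<in> e' - {p} \<Longrightarrow> r j \<le> r q"
    by (rule obtain_maximiser_and_neighbour_maximiser[OF U k j1(1,2), where r = r]) (rule that)
  have "r j1 > 0" using j1 unfolding r_def d_def by simp
  hence "r p > 0" using p_max[OF j1(1,2)] by linarith
  have nonisolated: "j < n" "hdeg E j > 0" if "e' \<in> E" "j \<in> e'" for e' j
    using that uniform_hypergraph_edgeD(2)[OF U] hdeg_pos_if_in_edge[OF U] by auto
  have ratio: "cmod (\<mu> - of_real (d i)) * r i ^ (k - 1) \<le> mval k E i * c ^ (k - 1)"
    if "e' \<in> E" "i \<in> e'" "\<And>e j. e \<in> E \<Longrightarrow> i \<in> e \<Longrightarrow> j \<in> e - {i} \<Longrightarrow> r j \<le> c" for e' i c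
  proof -
    have i: "i < n" "hdeg E i > 0" using nonisolated that(1,2) by auto
    show ?thesis
      using eigenvector_ratio_bound[OF U _ i eq[OF i(1)] that(3)[unfolded r_def d_def]] k
      unfolding r_def d_def by simp
  qed
  have bound_p: "cmod (\<mu> - of_real (d p)) * r p ^ (k - 1) \<le> mval k E p * r q ^ (k - 1)"
    by (rule ratio[OF e(1,2) q_max])
  have bound_q: "cmod (\<mu> - of_real (d q)) * r q ^ (k - 1) \<le> mval k E q * r p ^ (k - 1)"
  proof (rule ratio[OF e(1,3)])
    fix e' j assume "e' \<in> E" "j \<in> e' - {q}"
    thus "r j \<le> r p" using p_max[OF nonisolated] by blast
  qed
  have "cmod (\<mu> - of_real (d p)) * cmod (\<mu> - of_real (d q)) \<le> mval k E p * mval k E q"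
    by (rule product_le_of_cross_bounds[OF bound_p bound_q \<open>r p > 0\<close>])
      (simp_all add: r_def d_def mval_nonneg)
  hence "cmod \<mu> \<le> pair_bound k E p q" unfolding d_def by (rule cmod_le_pair_bound)
  thus ?thesis using e by blast
qed

lemma tensor_eigenvalue_le_pair_bound:
  assumes U: "uniform_hypergraph n k E" and k: "k \<ge> 2" and "E \<noteq> {}"
    and "tensor_eigenvalue n k (signless_laplacian_tensor k E) \<mu>"
  shows "\<exists>e p q. e \<in> E \<and> p \<in> e \<and> q \<in> e \<and> p \<noteq> q \<and> cmod \<mu> \<le> pair_bound k E p q"
proof -
  obtain x where nz: "\<exists>i<n. x i \<noteq> 0"
    and eq: "\<And>i. i < n \<Longrightarrow> tensor_apply n k (signless_laplacian_tensor k E) x i = \<mu> * x i ^ (k - 1)"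
    using assms(4) unfolding tensor_eigenvalue_def by blast
  show ?thesis
  proof (cases "\<exists>j<n. hdeg E j > 0 \<and> x j \<noteq> 0")
    case True
    thus ?thesis using eigenvalue_le_pair_bound_if_nonisolated_support[OF U k eq] by blast
  next
    case False
    then obtain i where "i < n" "hdeg E i = 0" "x i \<noteq> 0" using nz by auto
    hence "\<mu> = 0" using eigenvalue_zero_at_isolated_vertex[OF U _ _ _ _ eq] k by simp
    obtain e p q where "e \<in> E" "p \<in> e" "q \<in> e" "p \<noteq> q"
      using uniform_hypergraph_edge_pair[OF U k assms(3)] by blast
    thus ?thesis using \<open>\<mu> = 0\<close> pair_bound_nonneg[of k E p q] by auto
  qed
qed

theorem corollary2p3:
  fixes n k :: nat and E :: "nat set set"
  assumes "uniform_hypergraph n k E" and "k \<ge> 2" and "E \<noteq> {}"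
  shows "tensor_spectral_radius n k (signless_laplacian_tensor k E)
           \<le> Max {pair_bound k E i j | e i j. e \<in> E \<and> i \<in> e \<and> j \<in> e \<and> i \<noteq> j}"
proof -
  let ?B = "{pair_bound k E i j | e i j. e \<in> E \<and> i \<in> e \<and> j \<in> e \<and> i \<noteq> j}"
  have "?B \<subseteq> (\<lambda>(i, j). pair_bound k E i j) ` ({..<n} \<times> {..<n})"
    using uniform_hypergraph_edgeD(2)[OF assms(1)] by fastforce
  hence fin: "finite ?B" by (rule finite_subset) simp
  obtain e j where "e \<in> E" "j \<in> e" using uniform_hypergraph_edge_pair[OF assms] by blast
  hence "n > 0" using uniform_hypergraph_edgeD(2)[OF assms(1)] by fastforce
  then obtain \<mu>0 where "tensor_eigenvalue n k (signless_laplacian_tensor k E) \<mu>0"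
    using signless_laplacian_eigenvalue_exists[OF assms(1,2)] by blast
  hence "{cmod \<mu> | \<mu>. tensor_eigenvalue n k (signless_laplacian_tensor k E) \<mu>} \<noteq> {}" by blast
  thus ?thesis unfolding tensor_spectral_radius_def
  proof (rule cSup_least)
    fix s assume "s \<in> {cmod \<mu> | \<mu>. tensor_eigenvalue n k (signless_laplacian_tensor k E) \<mu>}"
    then obtain \<mu> where s: "s = cmod \<mu>" and "tensor_eigenvalue n k (signless_laplacian_tensor k E) \<mu>"
      by blast
    then obtain e p q where "e \<in> E" "p \<in> e" "q \<in> e" "p \<noteq> q" "cmod \<mu> \<le> pair_bound k E p q"
      using tensor_eigenvalue_le_pair_bound[OF assms] by blast
    moreover from this have "pair_bound k E p q \<le> Max ?B" using fin by (intro Max_ge) blast+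
    ultimately show "s \<le> Max ?B" using s by linarith
  qed
qed

end
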